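(* Let $\Pi=((p_1,\dots,p_n),(P_1,\dots,P_n),(d_1,\dots,d_n))$ be an $n$-pod. (1) Suppose $\beta\in B_\Pi$ is a butterfly bond of $\Pi$, with left and right vectors $L,R\in S^2$. Then, up to a permutation of the indices $1,\dots,n$, there exists $m\le n$ such that $p_1,\dots,p_m$ lie on a line parallel to $L$ and $P_{m+1},\dots,P_n$ lie on a line parallel to $R$. (2) Conversely, let $L,R\in S^2$ and $m\le n$ be such that $p_1,\dots,p_m$ lie on a line parallel to $L$ and $P_{m+1},\dots,P_n$ lie on a line parallel to $R$. Then $\Pi$ has a butterfly bond with left vector $L$ and right vector $R$.
   Context: An $n$-pod is a triple of platform points $p_i\in\mathbb{R}^3$, base points $P_i\in\mathbb{R}^3$ and leg lengths $d_i\ge0$. Write a direct isometry as $v\mapsto Mv+y$ ($M\in SO(3)$) and put $x=-M^ty$, $r=\langle y,y\rangle$. It corresponds to $(h:M:x:y:r)=(1:m_{11}:\dots:m_{33}:x_1:x_2:x_3:y_1:y_2:y_3:r)\in\mathbb{P}^{16}_{\mathbb{C}}$. $X$ is the complex Zariski closure of all such points. Throughout, $\langle u,u'\rangle=u^tu'$ is the complex bilinear form on $\mathbb{C}^3$. Let $l_i$ be the linear form $$-d_i^2h+(\langle p_i,p_i\rangle+\langle P_i,P_i\rangle)h+r-2\langle p_i,x\rangle-2\langle y,P_i\rangle-2\langle Mp_i,P_i\rangle.$$ Define: - $K_\Pi=X\cap\{l_1=\dots=l_n=0\}$; - $B=X\cap\{h=0\}$; - the set of bonds $B_\Pi=K_\Pi\cap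 B$. A point $\beta=(0:M:x:y:r)\in B$ is a butterfly point if $M\neq0$ and $rM+2yx^t=0$. A butterfly bond is a bond which is a butterfly point. Left and right vectors. For a butterfly point, $M=vw^t$ with $v,w\in\mathbb{C}^3$ nonzero and isotropic ($\langle v,v\rangle=\langle w,w\rangle=0$). For nonzero isotropic $u=(\alpha,\beta',\gamma)$, define $S(u)\in S^2$ in two steps. - First map $u$ to $\mathbb{P}^1_{\mathbb{C}}$: send it to $(\alpha-i\beta':\gamma)$ if $(i\alpha+\beta',\gamma)\ne(0,0)$, and to $(\gamma:-\alpha-i\beta')$ otherwise. - Then apply $(0:1)\mapsto(0,0,1)$ and $(1:a+ib)\mapsto\frac{1}{a^2+b^2+1}(2a,2b,a^2+b^2-1)$. The left vector is $L=S(w)$ and the right vector is $R=S(v)$. *)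

theory Defs
  imports "HOL-Analysis.Analysis"
begin

text \<open>Points of the affine cone over P^16: (h, M, x, y, r).\<close>
type_synonym pt = "complex \<times> (complex^3^3) \<times> (complex^3) \<times> (complex^3) \<times> complex"

definition pt_zero :: pt where
  "pt_zero = (0, 0, 0, 0, 0)"

definition pscale :: "complex \<Rightarrow> pt \<Rightarrow> pt" where
  "pscale c z = (case z of (h, M, x, y, r) \<Rightarrow>
     (c * h, \<chi> i j. c * M$i$j, \<chi> i. c * x$i, \<chi> i. c * y$i, c * r))"

text \<open>Complex bilinear form on C^3 (not Hermitian).\<close>
definition cdot :: "complex^3 \<Rightarrow> complex^3 \<Rightarrow> complex" where
  "cdot u v = (\<Sum>i\<in>UNIV. u$i * v$i)"

definition outer :: "complex^3 \<Rightarrow> complex^3 \<Rightarrow> complex^3^3" where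
  "outer v w = (\<chi> i j. v$i * w$j)"

definition cvec :: "real^3 \<Rightarrow> complex^3" where
  "cvec v = (\<chi> i. complex_of_real (v$i))"

definition cmat :: "real^3^3 \<Rightarrow> complex^3^3" where
  "cmat A = (\<chi> i j. complex_of_real (A$i$j))"

definition SO3 :: "(real^3^3) set" where
  "SO3 = {A. orthogonal_matrix A \<and> det A = 1}"

text \<open>The point (1 : M : x : y : r) attached to the direct isometry v \<mapsto> M v + y.\<close>
definition iso_point :: "real^3^3 \<Rightarrow> real^3 \<Rightarrow> pt" where
  "iso_point A t = (1, cmat A, cvec (- (transpose A *v t)), cvec t, complex_of_real (t \<bullet> t))"

inductive cpoly :: "(pt \<Rightarrow> complex) \<Rightarrow> bool" where
  cp_const: "cpoly (\<lambda>_. c)"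
| cp_h: "cpoly (\<lambda>(h, M, x, y, r). h)"
| cp_M: "cpoly (\<lambda>(h, M, x, y, r). M$i$j)"
| cp_x: "cpoly (\<lambda>(h, M, x, y, r). x$i)"
| cp_y: "cpoly (\<lambda>(h, M, x, y, r). y$i)"
| cp_r: "cpoly (\<lambda>(h, M, x, y, r). r)"
| cp_add: "cpoly f \<Longrightarrow> cpoly g \<Longrightarrow> cpoly (\<lambda>z. f z + g z)"
| cp_mult: "cpoly f \<Longrightarrow> cpoly g \<Longrightarrow> cpoly (\<lambda>z. f z * g z)"

definition zariski_closure :: "pt set \<Rightarrow> pt set" where
  "zariski_closure S = {z. \<forall>f. cpoly f \<and> (\<forall>s\<in>S. f s = 0) \<longrightarrow> f z = 0}"

text \<open>Affine cone over the image of SE(3).\<close>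
definition iso_cone :: "pt set" where
  "iso_cone = {pscale c (iso_point A t) | c A t. A \<in> SO3}"

text \<open>X, as the set of nonzero representatives of its projective points.\<close>
definition Xvar :: "pt set" where
  "Xvar = {z \<in> zariski_closure iso_cone. z \<noteq> pt_zero}"

definition lform :: "real^3 \<Rightarrow> real^3 \<Rightarrow> real \<Rightarrow> pt \<Rightarrow> complex" where
  "lform p P d z = (case z of (h, M, x, y, r) \<Rightarrow>
      - (complex_of_real (d^2)) * h
      + (cdot (cvec p) (cvec p) + cdot (cvec P) (cvec P)) * h + r
      - 2 * cdot (cvec p) x - 2 * cdot y (cvec P) - 2 * cdot (M *v cvec p) (cvec P))"

definition KPi :: "nat \<Rightarrow> (nat \<Rightarrow> real^3) \<Rightarrow> (nat \<Rightarrow> real^3) \<Rightarrow> (nat \<Rightarrow> real) \<Rightarrow> pt set" where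
  "KPi n p P d = {z \<in> Xvar. \<forall>i<n. lform (p i) (P i) (d i) z = 0}"

definition Bset :: "pt set" where
  "Bset = {z \<in> Xvar. fst z = 0}"

definition bonds :: "nat \<Rightarrow> (nat \<Rightarrow> real^3) \<Rightarrow> (nat \<Rightarrow> real^3) \<Rightarrow> (nat \<Rightarrow> real) \<Rightarrow> pt set" where
  "bonds n p P d = KPi n p P d \<inter> Bset"

definition butterfly_point :: "pt \<Rightarrow> bool" where
  "butterfly_point z \<longleftrightarrow> z \<in> Bset \<and> (case z of (h, M, x, y, r) \<Rightarrow>
      M \<noteq> 0 \<and> (\<chi> i j. r * M$i$j + 2 * y$i * x$j) = (0 :: complex^3^3))"

definition butterfly_bond :: "nat \<Rightarrow> (nat \<Rightarrow> real^3) \<Rightarrow> (nat \<Rightarrow> real^3) \<Rightarrow> (nat \<Rightarrow> real) \<Rightarrow> pt \<Rightarrow> bool" where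
  "butterfly_bond n p P d z \<longleftrightarrow> z \<in> bonds n p P d \<and> butterfly_point z"

definition isotropic :: "complex^3 \<Rightarrow> bool" where
  "isotropic u \<longleftrightarrow> u \<noteq> 0 \<and> cdot u u = 0"

definition toP1 :: "complex^3 \<Rightarrow> complex \<times> complex" where
  "toP1 u = (if (\<i> * u$1 + u$2, u$3) \<noteq> (0, 0)
             then (u$1 - \<i> * u$2, u$3)
             else (u$3, - u$1 - \<i> * u$2))"

text \<open>Inverse stereographic projection P^1 -> S^2.\<close>
definition stereo :: "complex \<times> complex \<Rightarrow> real^3" where
  "stereo z = (if fst z = 0 then vector [0, 0, 1]
     else (let q = snd z / fst z; a = Re q; b = Im q in
           (1 / (a^2 + b^2 + 1)) *\<^sub>R vector [2 * a, 2 * b, a^2 + b^2 - 1]))"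

definition Smap :: "complex^3 \<Rightarrow> real^3" where
  "Smap u = stereo (toP1 u)"

definition Mof :: "pt \<Rightarrow> complex^3^3" where
  "Mof z = fst (snd z)"

definition on_line_parallel :: "(nat \<Rightarrow> real^3) \<Rightarrow> nat set \<Rightarrow> real^3 \<Rightarrow> bool" where
  "on_line_parallel q I L \<longleftrightarrow> (\<exists>a. \<forall>i\<in>I. \<exists>t::real. q i = a + t *\<^sub>R L)"

end

theory Submission
  imports Defs "HOL-Computational_Algebra.Polynomial"
begin

text \<open>
  The polynomials h x + M^T y, h y + M x, h r - \<langle>x,x\<rangle> and h r - \<langle>y,y\<rangle> vanish on the
  isometries, hence on X. At a point of X with h = 0 and M = v w^T this makes x and y isotropic
  with \<langle>w,x\<rangle> = \<langle>v,y\<rangle> = 0, so x = \<mu> w and y = \<kappa> v, and the butterfly condition gives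
  r = -2\<kappa>\<mu>. There every leg equation factors as -2(\<kappa> + \<langle>w,p_i\<rangle>)(\<mu> + \<langle>v,P_i\<rangle>), and a real
  vector orthogonal to the isotropic vector w is a multiple of S(w); so the legs whose first
  factor vanishes have platform points on a line parallel to L = S(w), and the others have base
  points on a line parallel to R = S(v).

  Conversely, the Euler-Rodrigues parametrization of the isometries by a quaternion and two
  translations is polynomial and maps real parameters into the cone over SE(3). A polynomial
  vanishing there vanishes at all real, hence at all complex parameters, so the whole complex
  image lies in X. An isotropic quaternion gives M = v w^T for any prescribed isotropic v and w
  up to scaling, with x and y arbitrary multiples of w and v; choosing these multiples to match
  the two lines turns every leg equation into 0 = 0.
\<close>

section \<open>Coordinates and equations of X\<close>

definition hof :: "pt \<Rightarrow> complex" where "hof z = fst z"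
definition xof :: "pt \<Rightarrow> complex^3" where "xof z = fst (snd (snd z))"
definition yof :: "pt \<Rightarrow> complex^3" where "yof z = fst (snd (snd (snd z)))"
definition rof :: "pt \<Rightarrow> complex" where "rof z = snd (snd (snd (snd z)))"

lemma pt_eq_coords: "z = (hof z, Mof z, xof z, yof z, rof z)"
  by (simp add: hof_def Mof_def xof_def yof_def rof_def)

lemma cpoly_hof: "cpoly hof"
  using cp_h by (simp add: split_def hof_def[abs_def])

lemma cpoly_Mof: "cpoly (\<lambda>z. Mof z $ i $ j)"
  using cp_M[of i j] by (simp add: split_def Mof_def)

lemma cpoly_xof: "cpoly (\<lambda>z. xof z $ i)"
  using cp_x[of i] by (simp add: split_def xof_def)

lemma cpoly_yof: "cpoly (\<lambda>z. yof z $ i)"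
  using cp_y[of i] by (simp add: split_def yof_def)

lemma cpoly_rof: "cpoly rof"
  using cp_r by (simp add: split_def rof_def[abs_def])

lemma cpoly_diff: "cpoly f \<Longrightarrow> cpoly g \<Longrightarrow> cpoly (\<lambda>z. f z - g z)"
  using cp_add[OF _ cp_mult[OF cp_const[of "-1"]]] by simp

lemma cpoly_sum: "finite A \<Longrightarrow> (\<And>a. a \<in> A \<Longrightarrow> cpoly (f a)) \<Longrightarrow> cpoly (\<lambda>z. \<Sum>a\<in>A. f a z)"
proof (induction A rule: finite_induct)
  case empty then show ?case using cp_const[of 0] by simp
next
  case (insert a A) then show ?case by (simp add: cp_add)
qed

lemmas cpoly_intros = cp_const cp_add cp_mult cpoly_diff cpoly_sum
  cpoly_hof cpoly_Mof cpoly_xof cpoly_yof cpoly_rof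

lemma cvec_matrix_vector_mult: "cvec (A *v t) = cmat A *v cvec t"
  by (simp add: vec_eq_iff cvec_def cmat_def matrix_vector_mult_def)

lemma cvec_uminus: "cvec (- t) = - cvec t"
  by (simp add: cvec_def vec_eq_iff)

lemma cdot_cvec: "cdot (cvec s) (cvec t) = of_real (s \<bullet> t)"
  by (simp add: cdot_def cvec_def inner_vec_def)

lemma cdot_smult_left: "cdot (c *s u) v = c * cdot u v"
  by (simp add: cdot_def sum_distrib_left ac_simps)

lemma cdot_smult_right: "cdot u (c *s v) = c * cdot u v"
  by (simp add: cdot_def sum_distrib_left ac_simps)

lemma coords_pscale_iso_point:
  "hof (pscale c (iso_point A t)) = c"
  "Mof (pscale c (iso_point A t)) = (\<chi> i j. c * cmat A $ i $ j)"
  "xof (pscale c (iso_point A t)) = c *s cvec (- (transpose A *v t))"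
  "yof (pscale c (iso_point A t)) = c *s cvec t"
  "rof (pscale c (iso_point A t)) = c * of_real (t \<bullet> t)"
  by (simp_all add: hof_def Mof_def xof_def yof_def rof_def pscale_def iso_point_def vec_eq_iff)

lemma scaled_matrix_vector_mult:
  fixes M :: "'a::comm_semiring_1^'n^'m"
  shows "(\<chi> i j. c * M $ i $ j) *v (d *s u) = (c * d) *s (M *v u)"
  by (auto simp: vec_eq_iff matrix_vector_mult_def sum_distrib_left mult_ac intro!: sum.cong)

lemma transpose_scaled: "transpose (\<chi> i j. c * M $ i $ j) = (\<chi> i j. c * transpose M $ i $ j)"
  by (simp add: vec_eq_iff transpose_def)

lemma cmat_transpose: "transpose (cmat A) = cmat (transpose A)"
  by (simp add: vec_eq_iff cmat_def transpose_def)

lemma SO3_mult_transpose: "A \<in> SO3 \<Longrightarrow> A *v (transpose A *v t) = t"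
  by (simp only: matrix_vector_mul_assoc) (simp add: SO3_def orthogonal_matrix_def)

lemma SO3_inner_transpose: "A \<in> SO3 \<Longrightarrow> (transpose A *v t) \<bullet> (transpose A *v t) = t \<bullet> t"
  by (metis SO3_mult_transpose dot_lmul_matrix transpose_matrix_vector)

lemma Xvar_vanishing:
  assumes "z \<in> Xvar" "cpoly f" "\<And>c A t. A \<in> SO3 \<Longrightarrow> f (pscale c (iso_point A t)) = 0"
  shows "f z = 0"
  using assms unfolding Xvar_def zariski_closure_def iso_cone_def by blast

lemma Xvar_vanishing_vec:
  assumes "z \<in> Xvar" "\<And>i. cpoly (\<lambda>z. F z $ i)" "\<And>c A t. A \<in> SO3 \<Longrightarrow> F (pscale c (iso_point A t)) = 0"
  shows "F z = 0"
  using Xvar_vanishing[OF assms(1,2), of i for i] assms(3) by (simp add: vec_eq_iff)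

lemma Xvar_eq_x: "z \<in> Xvar \<Longrightarrow> hof z *s xof z + transpose (Mof z) *v yof z = 0"
proof (erule Xvar_vanishing_vec)
  show "cpoly (\<lambda>z. (hof z *s xof z + transpose (Mof z) *v yof z) $ i)" for i
    by (simp add: matrix_vector_mult_def transpose_def) (intro cpoly_intros; simp)
  show "hof (pscale c (iso_point A t)) *s xof (pscale c (iso_point A t))
      + transpose (Mof (pscale c (iso_point A t))) *v yof (pscale c (iso_point A t)) = 0" for c A t
    by (simp add: coords_pscale_iso_point transpose_scaled scaled_matrix_vector_mult cmat_transpose
        cvec_uminus cvec_matrix_vector_mult del: transpose_matrix_vector)
qed

lemma Xvar_eq_y: "z \<in> Xvar \<Longrightarrow> hof z *s yof z + Mof z *v xof z = 0"
proof (erule Xvar_vanishing_vec)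
  show "cpoly (\<lambda>z. (hof z *s yof z + Mof z *v xof z) $ i)" for i
    by (simp add: matrix_vector_mult_def) (intro cpoly_intros; simp)
  show "hof (pscale c (iso_point A t)) *s yof (pscale c (iso_point A t))
      + Mof (pscale c (iso_point A t)) *v xof (pscale c (iso_point A t)) = 0" if "A \<in> SO3" for c A t
  proof -
    have "A *v (- (transpose A *v t)) = - t"
      using SO3_mult_transpose[OF that] by (metis matrix_vector_mul_linear linear_neg)
    then have "cmat A *v cvec (- (transpose A *v t)) = - cvec t"
      by (metis cvec_matrix_vector_mult cvec_uminus)
    then show ?thesis
      by (simp add: coords_pscale_iso_point scaled_matrix_vector_mult del: transpose_matrix_vector)
  qed
qed

lemma Xvar_eq_yy: "z \<in> Xvar \<Longrightarrow> hof z * rof z - cdot (yof z) (yof z) = 0"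
proof (erule Xvar_vanishing)
  show "cpoly (\<lambda>z. hof z * rof z - cdot (yof z) (yof z))"
    unfolding cdot_def by (intro cpoly_intros; simp)
  show "hof (pscale c (iso_point A t)) * rof (pscale c (iso_point A t))
      - cdot (yof (pscale c (iso_point A t))) (yof (pscale c (iso_point A t))) = 0" for c A t
    by (simp add: coords_pscale_iso_point cdot_smult_left cdot_smult_right cdot_cvec)
qed

lemma Xvar_eq_xx: "z \<in> Xvar \<Longrightarrow> hof z * rof z - cdot (xof z) (xof z) = 0"
proof (erule Xvar_vanishing)
  show "cpoly (\<lambda>z. hof z * rof z - cdot (xof z) (xof z))"
    unfolding cdot_def by (intro cpoly_intros; simp)
  show "hof (pscale c (iso_point A t)) * rof (pscale c (iso_point A t))
      - cdot (xof (pscale c (iso_point A t))) (xof (pscale c (iso_point A t))) = 0" if "A \<in> SO3" for c A t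
    using SO3_inner_transpose[OF that, of t]
    by (simp add: coords_pscale_iso_point cdot_smult_left cdot_smult_right cdot_cvec
        del: transpose_matrix_vector)
qed

section \<open>Isotropic vectors and butterfly points\<close>

lemma cdot_3: "cdot u v = u$1 * v$1 + u$2 * v$2 + u$3 * v$3"
  by (simp add: cdot_def sum_3)

lemma cdot_commute: "cdot u v = cdot v u"
  by (simp add: cdot_def mult.commute)

lemma vec3_eq_iff: "(x::'a^3) = y \<longleftrightarrow> x$1 = y$1 \<and> x$2 = y$2 \<and> x$3 = y$3"
  by (simp add: vec_eq_iff forall_3)

lemma nonzero_vec_component: "(x::'a::zero^'n) \<noteq> 0 \<Longrightarrow> \<exists>k. x$k \<noteq> 0"
  by (metis vec_eq_iff zero_index)

lemma isotropic_orthogonal_minors: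
  assumes "cdot w w = 0" "cdot z z = 0" "cdot w z = 0"
  shows "z$i * w$j = z$j * w$i"
proof -
  have a: "w$1 * w$1 + w$2 * w$2 + w$3 * w$3 = 0" "z$1*z$1 + z$2*z$2 + z$3*z$3 = 0"
    "w$1*z$1 + w$2*z$2 + w$3*z$3 = 0"
    using assms by (simp_all add: cdot_3)
  have "z$1 * w$2 - z$2 * w$1 = 0" "z$1 * w$3 - z$3 * w$1 = 0" "z$2 * w$3 - z$3 * w$2 = 0"
    using a by algebra+
  then show ?thesis
    using exhaust_3[of i] exhaust_3[of j] by (auto simp: algebra_simps)
qed

lemma isotropic_orthogonal_parallel:
  assumes "isotropic w" "cdot z z = 0" "cdot w z = 0"
  shows "\<exists>\<mu>. z = \<mu> *s w"
proof -
  obtain k where k: "w$k \<noteq> 0"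
    using assms(1) nonzero_vec_component unfolding isotropic_def by blast
  have "z = (z$k / w$k) *s w"
    using isotropic_orthogonal_minors[OF _ assms(2,3), of _ k] assms(1) k
    by (simp add: vec_eq_iff field_simps isotropic_def)
  then show ?thesis by blast
qed

lemma outer_mult_vector: "outer v w *v u = cdot w u *s v"
  by (simp add: outer_def matrix_vector_mult_def cdot_def vec_eq_iff sum_distrib_left ac_simps)

lemma transpose_outer_mult_vector: "transpose (outer v w) *v t = cdot v t *s w"
  by (simp add: outer_def matrix_vector_mult_def transpose_def cdot_def vec_eq_iff
      sum_distrib_left ac_simps del: transpose_matrix_vector)

lemma outer_nonzero: "v \<noteq> 0 \<Longrightarrow> w \<noteq> 0 \<Longrightarrow> outer v w \<noteq> 0"
proof -
  assume "v \<noteq> 0" "w \<noteq> 0"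
  then obtain a b where "v$a \<noteq> 0" "w$b \<noteq> 0" using nonzero_vec_component by blast
  then have "outer v w $ a $ b \<noteq> 0" by (simp add: outer_def)
  then show ?thesis by auto
qed

lemma Xvar_infinity_rank_one_coords:
  assumes X: "z \<in> Xvar" and h: "hof z = 0" and M: "Mof z = outer v w"
    and v: "isotropic v" and w: "isotropic w"
  shows "\<exists>\<kappa> \<mu>. xof z = \<mu> *s w \<and> yof z = \<kappa> *s v"
proof -
  have "cdot v (yof z) *s w = 0"
    using Xvar_eq_x[OF X] h M by (simp add: transpose_outer_mult_vector del: transpose_matrix_vector)
  then have vy: "cdot v (yof z) = 0"
    using w by (simp add: isotropic_def)
  have "cdot w (xof z) *s v = 0"
    using Xvar_eq_y[OF X] h M by (simp add: outer_mult_vector)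
  then have wx: "cdot w (xof z) = 0"
    using v by (simp add: isotropic_def)
  have "cdot (xof z) (xof z) = 0" "cdot (yof z) (yof z) = 0"
    using Xvar_eq_xx[OF X] Xvar_eq_yy[OF X] h by simp_all
  then show ?thesis
    using isotropic_orthogonal_parallel[OF w _ wx] isotropic_orthogonal_parallel[OF v _ vy] by blast
qed

lemma butterfly_point_coords:
  assumes bf: "butterfly_point z" and M: "Mof z = outer v w"
    and v: "isotropic v" and w: "isotropic w"
  shows "\<exists>\<kappa> \<mu>. z = (0, outer v w, \<mu> *s w, \<kappa> *s v, -2 * \<kappa> * \<mu>)"
proof -
  have X: "z \<in> Xvar" and h: "hof z = 0"
    using bf by (simp_all add: butterfly_point_def Bset_def hof_def)
  have rel: "rof z * Mof z $ i $ j + 2 * yof z $ i * xof z $ j = 0" for i j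
  proof -
    obtain h M x y r where "z = (h, M, x, y, r)"
      by (metis prod.exhaust)
    then show ?thesis
      using bf by (simp add: butterfly_point_def vec_eq_iff Mof_def xof_def yof_def rof_def)
  qed
  obtain \<kappa> \<mu> where x: "xof z = \<mu> *s w" and y: "yof z = \<kappa> *s v"
    using Xvar_infinity_rank_one_coords[OF X h M v w] by blast
  obtain a b where a: "v$a \<noteq> 0" and b: "w$b \<noteq> 0"
    using v w nonzero_vec_component unfolding isotropic_def by blast
  have "(v$a * w$b) * (rof z + 2 * \<kappa> * \<mu>) = 0"
    using rel[of a b] M x y by (simp add: outer_def algebra_simps)
  then have "rof z = -2 * \<kappa> * \<mu>"
    using a b by (simp add: eq_neg_iff_add_eq_0)
  then show ?thesis
    using h M x y by (metis pt_eq_coords)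
qed

lemma lform_butterfly:
  "lform p P d (0, outer v w, \<mu> *s w, \<kappa> *s v, -2 * \<kappa> * \<mu>)
     = -2 * ((\<kappa> + cdot w (cvec p)) * (\<mu> + cdot v (cvec P)))"
proof -
  have "cdot (outer v w *v cvec p) (cvec P) = cdot w (cvec p) * cdot v (cvec P)"
    by (simp add: outer_mult_vector cdot_smult_left)
  then have "lform p P d (0, outer v w, \<mu> *s w, \<kappa> *s v, -2 * \<kappa> * \<mu>)
      = -2 * \<kappa> * \<mu> - 2 * (\<mu> * cdot w (cvec p)) - 2 * (\<kappa> * cdot v (cvec P))
        - 2 * (cdot w (cvec p) * cdot v (cvec P))"
    by (simp add: lform_def cdot_smult_left cdot_smult_right cdot_commute[of "cvec p" w])
  then show ?thesis
    by (simp add: algebra_simps)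
qed

section \<open>The map S\<close>

lemma norm_stereo: "norm (stereo z) = 1"
proof (cases "fst z = 0")
  case True
  then show ?thesis by (simp add: stereo_def norm_eq_sqrt_inner inner_vec_def sum_3)
next
  case False
  define a where "a = Re (snd z / fst z)"
  define b where "b = Im (snd z / fst z)"
  define V :: "real^3" where "V = vector [2 * a, 2 * b, a^2 + b^2 - 1]"
  have s: "stereo z = (1 / (a^2 + b^2 + 1)) *\<^sub>R V"
    using False by (simp add: stereo_def a_def b_def V_def Let_def)
  have pos: "a^2 + b^2 + 1 > 0"
    by (simp add: add_nonneg_pos)
  have "V \<bullet> V = (a^2 + b^2 + 1)^2"
    by (simp add: V_def inner_vec_def sum_3 power2_eq_square algebra_simps)
  then have "stereo z \<bullet> stereo z = 1"
    using pos by (simp add: s power2_eq_square)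
  then show ?thesis
    by (simp add: norm_eq_sqrt_inner)
qed

lemma norm_Smap: "norm (Smap w) = 1"
  by (simp add: Smap_def norm_stereo)

lemma cvec_add: "cvec (s + t) = cvec s + cvec t"
  by (simp add: cvec_def vec_eq_iff)

lemma cvec_diff: "cvec (s - t) = cvec s - cvec t"
  by (simp add: cvec_def vec_eq_iff)

lemma cvec_scaleR: "cvec (c *\<^sub>R t) = complex_of_real c *s cvec t"
  by (simp add: cvec_def vec_eq_iff)

lemma cdot_add_right: "cdot u (s + t) = cdot u s + cdot u t"
  by (simp add: cdot_def sum.distrib algebra_simps)

lemma cdot_diff_right: "cdot u (s - t) = cdot u s - cdot u t"
  by (simp add: cdot_def sum_subtractf algebra_simps)

lemma cdot_Smap:
  assumes "isotropic w"
  shows "cdot w (cvec (Smap w)) = 0"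
proof -
  let ?\<alpha> = "w$1" and ?\<beta> = "w$2" and ?\<gamma> = "w$3"
  have iso: "?\<alpha> * ?\<alpha> + ?\<beta> * ?\<beta> + ?\<gamma> * ?\<gamma> = 0"
    using assms by (simp add: isotropic_def cdot_3)
  show ?thesis
  proof (cases "fst (toP1 w) = 0")
    case True
    have "?\<gamma> = 0"
    proof (cases "(\<i> * ?\<alpha> + ?\<beta>, ?\<gamma>) \<noteq> (0, 0)")
      case True
      with \<open>fst (toP1 w) = 0\<close> have "?\<alpha> - \<i> * ?\<beta> = 0"
        by (simp add: toP1_def)
      moreover have "(?\<alpha> - \<i> * ?\<beta>) * (?\<alpha> + \<i> * ?\<beta>) + ?\<gamma> * ?\<gamma> = 0"
        using iso by (simp add: algebra_simps)
      ultimately have "?\<gamma> * ?\<gamma> = 0"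
        by simp
      then show ?thesis by simp
    qed simp
    moreover have "Smap w = vector [0, 0, 1]"
      using True by (simp add: Smap_def stereo_def)
    ultimately show ?thesis
      by (simp add: cdot_3 cvec_def)
  next
    case False
    then have tp: "toP1 w = (?\<alpha> - \<i> * ?\<beta>, ?\<gamma>)" and D: "?\<alpha> - \<i> * ?\<beta> \<noteq> 0"
      by (auto simp: toP1_def split: if_splits)
    define q where "q = ?\<gamma> / (?\<alpha> - \<i> * ?\<beta>)"
    define a where "a = Re q"
    define b where "b = Im q"
    have Smap: "Smap w = (1 / (a^2 + b^2 + 1)) *\<^sub>R vector [2 * a, 2 * b, a^2 + b^2 - 1]"
      using D by (simp add: Smap_def stereo_def tp q_def a_def b_def Let_def)
    have "q * (?\<alpha> - \<i> * ?\<beta>) = ?\<gamma>"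
      using D by (simp add: q_def)
    moreover have "(?\<alpha> - \<i> * ?\<beta>) * (?\<alpha> + \<i> * ?\<beta> + ?\<gamma> * q)
        = ?\<alpha> * ?\<alpha> + ?\<beta> * ?\<beta> + ?\<gamma> * (q * (?\<alpha> - \<i> * ?\<beta>))"
      by (simp add: algebra_simps)
    ultimately have "?\<alpha> + \<i> * ?\<beta> + ?\<gamma> * q = 0"
      using iso D by simp
    moreover have "?\<alpha> * (q + cnj q) + ?\<beta> * (- \<i> * (q - cnj q)) + ?\<gamma> * (q * cnj q - 1)
        = q * (?\<alpha> - \<i> * ?\<beta>) - ?\<gamma> + cnj q * (?\<alpha> + \<i> * ?\<beta> + ?\<gamma> * q)"
      by (simp add: algebra_simps)
    ultimately have "?\<alpha> * (q + cnj q) + ?\<beta> * (- \<i> * (q - cnj q)) + ?\<gamma> * (q * cnj q - 1) = 0"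
      using \<open>q * (?\<alpha> - \<i> * ?\<beta>) = ?\<gamma>\<close> by simp
    then have "cdot w (cvec (vector [2 * a, 2 * b, a^2 + b^2 - 1])) = 0"
      by (simp add: cdot_3 cvec_def a_def b_def complex_add_cnj complex_diff_cnj complex_mult_cnj
          algebra_simps)
    then show ?thesis
      by (simp add: Smap cvec_scaleR cdot_smult_right)
  qed
qed

definition re_vec :: "complex^'n \<Rightarrow> real^'n" where
  "re_vec u = (\<chi> i. Re (u$i))"

definition im_vec :: "complex^'n \<Rightarrow> real^'n" where
  "im_vec u = (\<chi> i. Im (u$i))"

lemma cdot_cvec_re_im: "cdot w (cvec p) = Complex (re_vec w \<bullet> p) (im_vec w \<bullet> p)"
  by (simp add: cdot_def cvec_def re_vec_def im_vec_def inner_vec_def complex_eq_iff)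

lemma isotropic_re_im:
  assumes "isotropic w"
  shows "re_vec w \<bullet> im_vec w = 0" and "im_vec w \<bullet> im_vec w = re_vec w \<bullet> re_vec w"
    and "re_vec w \<noteq> 0"
proof -
  have "cdot w w = Complex (re_vec w \<bullet> re_vec w - im_vec w \<bullet> im_vec w) (2 * (re_vec w \<bullet> im_vec w))"
    by (simp add: cdot_def re_vec_def im_vec_def inner_vec_def complex_eq_iff sum_subtractf
        sum_distrib_left algebra_simps)
  then show ab: "re_vec w \<bullet> im_vec w = 0" and bb: "im_vec w \<bullet> im_vec w = re_vec w \<bullet> re_vec w"
    using assms by (simp_all add: isotropic_def complex_eq_iff)
  show "re_vec w \<noteq> 0"
  proof
    assume "re_vec w = 0"
    then have "im_vec w = 0"
      using bb by simp
    with \<open>re_vec w = 0\<close> have "w = 0"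
      by (simp add: re_vec_def im_vec_def vec_eq_iff complex_eq_iff)
    with assms show False
      by (simp add: isotropic_def)
  qed
qed

lemma orthogonal_pair_parallel_cross3:
  fixes a b x :: "real^3"
  assumes "a \<bullet> x = 0" "b \<bullet> x = 0"
  shows "(cross3 a b \<bullet> cross3 a b) *\<^sub>R x = (cross3 a b \<bullet> x) *\<^sub>R cross3 a b"
proof -
  have "cross3 x (cross3 a b) = 0"
    using assms by (simp add: Lagrange inner_commute)
  then have "cross3 (cross3 a b) x = 0"
    by (metis cross_skew neg_equal_0_iff_equal)
  then show ?thesis
    using Lagrange[of "cross3 a b" "cross3 a b" x] by simp
qed

text \<open>The real and imaginary parts of an isotropic vector are orthogonal of equal length, so the
  real vectors orthogonal to it form the line spanned by the cross product of the two parts.\<close>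
lemma real_orthogonal_isotropic_parallel_Smap:
  assumes w: "isotropic w" and p: "cdot w (cvec p) = 0"
  shows "\<exists>t. p = t *\<^sub>R Smap w"
proof -
  define c where "c = cross3 (re_vec w) (im_vec w)"
  have "norm (im_vec w) = norm (re_vec w)"
    using isotropic_re_im(2)[OF w] by (simp add: norm_eq_sqrt_inner)
  then have "(norm c)^2 = (norm (re_vec w))^4"
    using norm_cross[of "re_vec w" "im_vec w"] isotropic_re_im(1)[OF w]
    by (simp add: c_def power4_eq_xxxx power2_eq_square)
  then have cc: "c \<bullet> c \<noteq> 0"
    using isotropic_re_im(3)[OF w] by (simp add: power2_norm_eq_inner)
  have par: "(c \<bullet> c) *\<^sub>R x = (c \<bullet> x) *\<^sub>R c" if "cdot w (cvec x) = 0" for x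
    using that orthogonal_pair_parallel_cross3 unfolding c_def by (simp add: cdot_cvec_re_im Complex_eq_0)
  define L where "L = Smap w"
  have L: "(c \<bullet> c) *\<^sub>R L = (c \<bullet> L) *\<^sub>R c"
    using par cdot_Smap[OF w] by (simp add: L_def)
  moreover have "L \<noteq> 0"
    using norm_Smap[of w] by (auto simp: L_def)
  ultimately have cL: "c \<bullet> L \<noteq> 0"
    using cc by auto
  have "(c \<bullet> c) *\<^sub>R (((c \<bullet> p) / (c \<bullet> L)) *\<^sub>R L) = ((c \<bullet> p) / (c \<bullet> L)) *\<^sub>R ((c \<bullet> c) *\<^sub>R L)"
    by (simp add: mult.commute)
  also have "\<dots> = (c \<bullet> p) *\<^sub>R c"
    using L cL by simp
  also have "\<dots> = (c \<bullet> c) *\<^sub>R p"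
    using par[OF p] by simp
  finally have "p = ((c \<bullet> p) / (c \<bullet> L)) *\<^sub>R L"
    using cc by (metis scaleR_cancel_left)
  then show ?thesis
    unfolding L_def by blast
qed

lemma on_line_parallel_Smap_iff:
  assumes "isotropic w"
  shows "on_line_parallel q S (Smap w) \<longleftrightarrow> (\<exists>c. \<forall>i\<in>S. cdot w (cvec (q i)) = c)"
proof
  assume "on_line_parallel q S (Smap w)"
  then obtain a where a: "\<forall>i\<in>S. \<exists>t::real. q i = a + t *\<^sub>R Smap w"
    by (auto simp: on_line_parallel_def)
  have "cdot w (cvec (q i)) = cdot w (cvec a)" if "i \<in> S" for i
    using a that cdot_Smap[OF assms]
    by (auto simp: cvec_add cvec_scaleR cdot_add_right cdot_smult_right)
  then show "\<exists>c. \<forall>i\<in>S. cdot w (cvec (q i)) = c"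
    by blast
next
  assume "\<exists>c. \<forall>i\<in>S. cdot w (cvec (q i)) = c"
  then obtain c where c: "\<forall>i\<in>S. cdot w (cvec (q i)) = c"
    by blast
  show "on_line_parallel q S (Smap w)"
  proof (cases "S = {}")
    case False
    then obtain i0 where i0: "i0 \<in> S"
      by blast
    have "\<exists>t. q i = q i0 + t *\<^sub>R Smap w" if "i \<in> S" for i
    proof -
      have "cdot w (cvec (q i - q i0)) = 0"
        using c i0 that by (simp add: cvec_diff cdot_diff_right)
      then obtain t where "q i - q i0 = t *\<^sub>R Smap w"
        using real_orthogonal_isotropic_parallel_Smap[OF assms] by blast
      then show ?thesis
        by (metis add.commute diff_add_cancel)
    qed
    then show ?thesis
      unfolding on_line_parallel_def by blast
  qed (simp add: on_line_parallel_def)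
qed

lemma Smap_scale:
  assumes c: "c \<noteq> 0"
  shows "Smap (c *s w) = Smap w"
proof -
  have e: "\<i> * (c * w$1) + c * w$2 = c * (\<i> * w$1 + w$2)"
    by (simp add: algebra_simps)
  have "toP1 (c *s w) = (c * fst (toP1 w), c * snd (toP1 w))"
  proof (cases "(\<i> * w$1 + w$2, w$3) = (0, 0)")
    case True
    then show ?thesis
      by (simp add: toP1_def e algebra_simps)
  next
    case False
    then have "(\<i> * (c * w$1) + c * w$2, c * w$3) \<noteq> (0, 0)"
      using c unfolding e by auto
    with False show ?thesis
      by (simp add: toP1_def right_diff_distrib)
  qed
  then show ?thesis
    using c by (simp add: Smap_def stereo_def)
qed

lemma isotropic_stereo_param:
  fixes q :: complex
  defines "w \<equiv> vector [(1 - q * q) / 2, \<i> * (1 + q * q) / 2, q] :: complex^3"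
  shows "isotropic w" and "toP1 w = (1, q)"
proof -
  have "\<i> * w$1 + w$2 = \<i>"
    by (simp add: w_def field_simps)
  moreover have "w$1 - \<i> * w$2 = 1"
    by (simp add: w_def field_simps)
  ultimately show "toP1 w = (1, q)"
    by (simp add: toP1_def w_def)
  have "cdot w w = ((1 - q * q) / 2) * ((1 - q * q) / 2) + (\<i> * (1 + q * q) / 2) * (\<i> * (1 + q * q) / 2) + q * q"
    by (simp add: cdot_3 w_def)
  also have "\<dots> = 0"
    by (simp add: field_simps)
  finally show "isotropic w"
    using \<open>\<i> * w$1 + w$2 = \<i>\<close> by (auto simp: isotropic_def)
qed

lemma stereo_Complex_inverse:
  fixes L :: "real^3"
  assumes L: "norm L = 1" and L3: "L$3 \<noteq> 1"
  defines "d \<equiv> 1 - L$3"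
  shows "stereo (1, Complex (L$1 / d) (L$2 / d)) = L"
proof -
  define a where "a = L$1 / d"
  define b where "b = L$2 / d"
  have d: "d \<noteq> 0"
    using L3 by (simp add: d_def)
  have "L$1 * L$1 + L$2 * L$2 + L$3 * L$3 = 1"
    using L by (simp add: norm_eq_sqrt_inner inner_vec_def sum_3)
  then have "L$1 * L$1 + L$2 * L$2 = d * (2 - d)"
    by (simp add: d_def algebra_simps)
  then have s: "a^2 + b^2 + 1 = 2 / d"
    using d by (simp add: a_def b_def power2_eq_square field_simps)
  have coords: "(1 / (2 / d)) * (2 * a) = L$1" "(1 / (2 / d)) * (2 * b) = L$2"
    "(1 / (2 / d)) * (2 / d - 2) = L$3"
    using d by (simp_all add: a_def b_def d_def field_simps)
  have s': "a^2 + b^2 - 1 = 2 / d - 2"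
    using s by simp
  have "(1 / (a^2 + b^2 + 1)) *\<^sub>R vector [2 * a, 2 * b, a^2 + b^2 - 1] = L"
    unfolding s s' using coords by (simp add: vec3_eq_iff)
  then show ?thesis
    by (simp add: stereo_def Let_def a_def b_def)
qed

lemma Smap_surj:
  assumes L: "norm L = 1"
  shows "\<exists>w. isotropic w \<and> Smap w = L"
proof (cases "L$3 = 1")
  case True
  have "L$1 * L$1 + L$2 * L$2 + L$3 * L$3 = 1"
    using L by (simp add: norm_eq_sqrt_inner inner_vec_def sum_3)
  then have "L$1 = 0" "L$2 = 0"
    using True by (simp_all add: sum_squares_eq_zero_iff)
  then have "L = vector [0, 0, 1]"
    using True by (simp add: vec3_eq_iff)
  moreover have "isotropic (vector [\<i>, 1, 0])"
    by (simp add: isotropic_def cdot_3 vec3_eq_iff)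
  ultimately show ?thesis
    by (force simp: Smap_def toP1_def stereo_def)
next
  case False
  then show ?thesis
    using isotropic_stereo_param stereo_Complex_inverse[OF L False] by (metis Smap_def)
qed

section \<open>Butterfly bonds force the legs onto two lines\<close>

lemma exists_permutes_subset_prefix:
  assumes "I \<subseteq> {..<n::nat}"
  shows "\<exists>\<sigma> m. \<sigma> permutes {..<n} \<and> m \<le> n \<and> (\<forall>i<m. \<sigma> i \<in> I) \<and> (\<forall>i\<in>{m..<n}. \<sigma> i \<notin> I)"
proof -
  have fin: "finite I"
    using assms finite_subset by blast
  define xs where "xs = sorted_list_of_set I @ sorted_list_of_set ({..<n} - I)"
  define m where "m = card I"
  have dist: "distinct xs" and set: "set xs = {..<n}"
    using fin assms by (auto simp: xs_def)
  then have len: "length xs = n"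
    using distinct_card by fastforce
  define \<sigma> where "\<sigma> i = (if i < n then xs ! i else i)" for i
  have "bij_betw ((!) xs) {..<n} {..<n}"
    using bij_betw_nth[OF dist] len set by simp
  then have "bij_betw \<sigma> {..<n} {..<n}"
    by (rule bij_betw_cong[THEN iffD1, rotated]) (simp add: \<sigma>_def)
  then have perm: "\<sigma> permutes {..<n}"
    by (rule bij_imp_permutes) (simp add: \<sigma>_def)
  have mn: "m \<le> n"
    using card_mono[OF _ assms] by (simp add: m_def)
  have "\<sigma> i \<in> I" if "i < m" for i
    using that mn fin by (simp add: \<sigma>_def xs_def nth_append m_def)
        (metis length_sorted_list_of_set nth_mem set_sorted_list_of_set)
  moreover have "\<sigma> i \<notin> I" if "i \<in> {m..<n}" for i
  proof -
    have "i - m < length (sorted_list_of_set ({..<n} - I))"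
      using that len by (simp add: xs_def m_def) linarith
    moreover have "\<sigma> i = sorted_list_of_set ({..<n} - I) ! (i - m)"
      using that len by (simp add: \<sigma>_def xs_def nth_append m_def)
    ultimately have "\<sigma> i \<in> set (sorted_list_of_set ({..<n} - I))"
      by (metis nth_mem)
    then show ?thesis
      by simp
  qed
  ultimately show ?thesis
    using perm mn by blast
qed

theorem butterfly_bond_lines:
  assumes bond: "butterfly_bond n p P d \<beta>" and v: "isotropic v" and w: "isotropic w"
    and M: "Mof \<beta> = outer v w"
  shows "\<exists>\<sigma> m. \<sigma> permutes {..<n} \<and> m \<le> n
    \<and> on_line_parallel (\<lambda>i. p (\<sigma> i)) {..<m} (Smap w)
    \<and> on_line_parallel (\<lambda>i. P (\<sigma> i)) {m..<n} (Smap v)"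
proof -
  obtain \<kappa> \<mu> where \<beta>: "\<beta> = (0, outer v w, \<mu> *s w, \<kappa> *s v, -2 * \<kappa> * \<mu>)"
    using butterfly_point_coords bond M v w unfolding butterfly_bond_def by blast
  have legs: "(\<kappa> + cdot w (cvec (p i))) * (\<mu> + cdot v (cvec (P i))) = 0" if "i < n" for i
    using bond that lform_butterfly[of "p i" "P i" "d i" v w \<mu> \<kappa>]
    by (simp add: butterfly_bond_def bonds_def KPi_def \<beta>)
  define I where "I = {i. i < n \<and> \<kappa> + cdot w (cvec (p i)) = 0}"
  obtain \<sigma> m where perm: "\<sigma> permutes {..<n}" and m: "m \<le> n"
    and front: "\<forall>i<m. \<sigma> i \<in> I" and rest: "\<forall>i\<in>{m..<n}. \<sigma> i \<notin> I"
    using exists_permutes_subset_prefix[of I n] by (auto simp: I_def)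
  have "\<forall>i\<in>{..<m}. cdot w (cvec (p (\<sigma> i))) = - \<kappa>"
    using front by (simp add: I_def add_eq_0_iff)
  moreover have "cdot v (cvec (P (\<sigma> i))) = - \<mu>" if "i \<in> {m..<n}" for i
  proof -
    have "\<sigma> i < n"
      using that permutes_in_image[OF perm] by simp
    moreover have "\<sigma> i \<notin> I"
      using that rest by blast
    ultimately show ?thesis
      using legs[of "\<sigma> i"] by (simp add: I_def add_eq_0_iff)
  qed
  ultimately have "on_line_parallel (\<lambda>i. p (\<sigma> i)) {..<m} (Smap w)"
    and "on_line_parallel (\<lambda>i. P (\<sigma> i)) {m..<n} (Smap v)"
    unfolding on_line_parallel_Smap_iff[OF v] on_line_parallel_Smap_iff[OF w] by blast+
  then show ?thesis
    using perm m by blast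
qed

section \<open>Polynomials vanishing at real points\<close>

definition poly_fun :: "(complex \<Rightarrow> complex) \<Rightarrow> bool" where
  "poly_fun g \<longleftrightarrow> (\<exists>p. \<forall>w. g w = poly p w)"

text \<open>Polynomials in finitely many variables are only needed through the fact that they are
  polynomial in each variable separately.\<close>
definition separately_poly :: "((nat \<Rightarrow> complex) \<Rightarrow> complex) \<Rightarrow> bool" where
  "separately_poly G \<longleftrightarrow> (\<forall>z k. poly_fun (\<lambda>w. G (z(k := w))))"

lemma poly_fun_const: "poly_fun (\<lambda>w. c)"
  unfolding poly_fun_def by (rule exI[of _ "[:c:]"]) simp

lemma poly_fun_id: "poly_fun (\<lambda>w. w)"
  unfolding poly_fun_def by (rule exI[of _ "[:0, 1:]"]) simp

lemma poly_fun_add: "poly_fun f \<Longrightarrow> poly_fun g \<Longrightarrow> poly_fun (\<lambda>w. f w + g w)"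
  unfolding poly_fun_def by (metis poly_add)

lemma poly_fun_mult: "poly_fun f \<Longrightarrow> poly_fun g \<Longrightarrow> poly_fun (\<lambda>w. f w * g w)"
  unfolding poly_fun_def by (metis poly_mult)

lemma separately_poly_const: "separately_poly (\<lambda>z. c)"
  by (simp add: separately_poly_def poly_fun_const)

lemma separately_poly_var: "separately_poly (\<lambda>z. z j)"
  unfolding separately_poly_def
proof (intro allI)
  show "poly_fun (\<lambda>w. (z(k := w)) j)" for z k
    by (cases "j = k") (simp_all add: poly_fun_id poly_fun_const)
qed

lemma separately_poly_add: "separately_poly F \<Longrightarrow> separately_poly G \<Longrightarrow> separately_poly (\<lambda>z. F z + G z)"
  unfolding separately_poly_def by (simp add: poly_fun_add)

lemma separately_poly_mult: "separately_poly F \<Longrightarrow> separately_poly G \<Longrightarrow> separately_poly (\<lambda>z. F z * G z)"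
  unfolding separately_poly_def by (simp add: poly_fun_mult)

lemma separately_poly_diff: "separately_poly F \<Longrightarrow> separately_poly G \<Longrightarrow> separately_poly (\<lambda>z. F z - G z)"
  using separately_poly_add[OF _ separately_poly_mult[OF separately_poly_const[of "-1"]]] by simp

lemma separately_poly_sum:
  "finite A \<Longrightarrow> (\<And>a. a \<in> A \<Longrightarrow> separately_poly (F a)) \<Longrightarrow> separately_poly (\<lambda>z. \<Sum>a\<in>A. F a z)"
  by (induction A rule: finite_induct) (simp_all add: separately_poly_const separately_poly_add)

lemma poly_fun_vanishing_on_reals:
  assumes "poly_fun g" "\<And>x. g (complex_of_real x) = 0"
  shows "g w = 0"
proof -
  obtain p where p: "\<And>w. g w = poly p w"
    using assms(1) unfolding poly_fun_def by blast
  have "p = 0"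
  proof (rule ccontr)
    assume "p \<noteq> 0"
    then have "finite {x. poly p x = 0}"
      by (rule poly_roots_finite)
    moreover have "range complex_of_real \<subseteq> {x. poly p x = 0}"
      using assms(2) p by auto
    ultimately show False
      using finite_subset infinite_UNIV_char_0 finite_imageD inj_of_real by blast
  qed
  then show ?thesis
    using p by simp
qed

lemma separately_poly_vanishing_on_reals:
  assumes G: "separately_poly G" and real: "\<And>z. (\<forall>j. z j \<in> \<real>) \<Longrightarrow> G z = 0"
    and z: "\<forall>j\<ge>K. z j \<in> \<real>"
  shows "G z = 0"
  using z
proof (induction K arbitrary: z)
  case 0
  then show ?case using real by simp
next
  case (Suc K)
  have "G (z(K := complex_of_real x)) = 0" for x
    by (rule Suc.IH) (use Suc.prems in \<open>auto simp: Suc_le_eq\<close>)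
  moreover have "poly_fun (\<lambda>w. G (z(K := w)))"
    using G unfolding separately_poly_def by blast
  ultimately have "G (z(K := z K)) = 0"
    using poly_fun_vanishing_on_reals by blast
  then show ?case by simp
qed

definition separately_poly_vec :: "((nat \<Rightarrow> complex) \<Rightarrow> complex^'n) \<Rightarrow> bool" where
  "separately_poly_vec V \<longleftrightarrow> (\<forall>i. separately_poly (\<lambda>z. V z $ i))"

definition separately_poly_mat :: "((nat \<Rightarrow> complex) \<Rightarrow> complex^'n^'m) \<Rightarrow> bool" where
  "separately_poly_mat M \<longleftrightarrow> (\<forall>i j. separately_poly (\<lambda>z. M z $ i $ j))"

lemma separately_poly_vec_add:
  "separately_poly_vec U \<Longrightarrow> separately_poly_vec V \<Longrightarrow> separately_poly_vec (\<lambda>z. U z + V z)"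
  unfolding separately_poly_vec_def by (simp add: separately_poly_add)

lemma separately_poly_vec_diff:
  "separately_poly_vec U \<Longrightarrow> separately_poly_vec V \<Longrightarrow> separately_poly_vec (\<lambda>z. U z - V z)"
  unfolding separately_poly_vec_def by (simp add: separately_poly_diff)

lemma separately_poly_vec_uminus: "separately_poly_vec U \<Longrightarrow> separately_poly_vec (\<lambda>z. - U z)"
  using separately_poly_vec_diff[of "\<lambda>z. 0"] by (simp add: separately_poly_vec_def separately_poly_const)

lemma separately_poly_vec_smult:
  "separately_poly c \<Longrightarrow> separately_poly_vec U \<Longrightarrow> separately_poly_vec (\<lambda>z. c z *s U z)"
  unfolding separately_poly_vec_def by (simp add: separately_poly_mult)

lemma separately_poly_vec_matrix_vector_mult:
  "separately_poly_mat M \<Longrightarrow> separately_poly_vec U \<Longrightarrow> separately_poly_vec (\<lambda>z. M z *v U z)"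
  unfolding separately_poly_vec_def separately_poly_mat_def matrix_vector_mult_def
  by (simp add: separately_poly_sum separately_poly_mult)

lemma separately_poly_mat_transpose: "separately_poly_mat M \<Longrightarrow> separately_poly_mat (\<lambda>z. transpose (M z))"
  unfolding separately_poly_mat_def transpose_def by simp

lemma separately_poly_cdot:
  "separately_poly_vec U \<Longrightarrow> separately_poly_vec V \<Longrightarrow> separately_poly (\<lambda>z. cdot (U z) (V z))"
  unfolding separately_poly_vec_def cdot_def by (simp add: separately_poly_sum separately_poly_mult)

lemma separately_poly_vec_vector:
  "separately_poly_vec (\<lambda>z. vector [z a, z b, z c] :: complex^3)"
  unfolding separately_poly_vec_def
proof
  fix i :: 3
  show "separately_poly (\<lambda>z. (vector [z a, z b, z c] :: complex^3) $ i)"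
    using exhaust_3[of i] by (auto simp: separately_poly_var)
qed

section \<open>The Euler-Rodrigues parametrization\<close>

text \<open>The Euler-Rodrigues matrix of the quaternion q0 + q1 i + q2 j + q3 k; for a real
  nonzero quaternion it is the norm of the quaternion times a rotation.\<close>
definition rodrigues_mat :: "'a::comm_ring_1 \<Rightarrow> 'a \<Rightarrow> 'a \<Rightarrow> 'a \<Rightarrow> 'a^3^3" where
  "rodrigues_mat q0 q1 q2 q3 = vector [
     vector [q0*q0 + q1*q1 - q2*q2 - q3*q3, 2*(q1*q2 - q0*q3), 2*(q1*q3 + q0*q2)],
     vector [2*(q1*q2 + q0*q3), q0*q0 - q1*q1 + q2*q2 - q3*q3, 2*(q2*q3 - q0*q1)],
     vector [2*(q1*q3 - q0*q2), 2*(q2*q3 + q0*q1), q0*q0 - q1*q1 - q2*q2 + q3*q3]]"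

definition quat_norm :: "'a::comm_ring_1 \<Rightarrow> 'a \<Rightarrow> 'a \<Rightarrow> 'a \<Rightarrow> 'a" where
  "quat_norm q0 q1 q2 q3 = q0*q0 + q1*q1 + q2*q2 + q3*q3"

text \<open>The isometry v \<mapsto> A v + (t + A u), with A the rotation of the quaternion, in homogeneous
  coordinates scaled by h = quat_norm. Two translations are used so that x and y stay
  independent of each other at h = 0.\<close>
definition rodrigues_point :: "complex \<Rightarrow> complex \<Rightarrow> complex \<Rightarrow> complex \<Rightarrow> complex^3 \<Rightarrow> complex^3 \<Rightarrow> pt" where
  "rodrigues_point q0 q1 q2 q3 t u = (let N = quat_norm q0 q1 q2 q3; R = rodrigues_mat q0 q1 q2 q3 in
     (N, R, - (transpose R *v t) - N *s u, N *s t + R *v u,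
      N * cdot t t + 2 * cdot t (R *v u) + N * cdot u u))"

definition rodrigues_param :: "(nat \<Rightarrow> complex) \<Rightarrow> pt" where
  "rodrigues_param z = rodrigues_point (z 0) (z 1) (z 2) (z 3)
     (vector [z 4, z 5, z 6]) (vector [z 7, z 8, z 9])"

lemma separately_poly_quat_norm: "separately_poly (\<lambda>z. quat_norm (z 0) (z 1) (z 2) (z 3))"
  unfolding quat_norm_def by (intro separately_poly_add separately_poly_mult separately_poly_var)

lemma separately_poly_mat_rodrigues: "separately_poly_mat (\<lambda>z. rodrigues_mat (z 0) (z 1) (z 2) (z 3))"
  unfolding separately_poly_mat_def
proof (intro allI)
  fix i j :: 3
  show "separately_poly (\<lambda>z. rodrigues_mat (z 0) (z 1) (z 2) (z 3) $ i $ j)"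
    using exhaust_3[of i] exhaust_3[of j]
    by (auto simp: rodrigues_mat_def intro!: separately_poly_add separately_poly_diff
        separately_poly_mult separately_poly_var separately_poly_const)
qed

lemma cpoly_comp_rodrigues_param: "cpoly f \<Longrightarrow> separately_poly (\<lambda>z. f (rodrigues_param z))"
proof (induction rule: cpoly.induct)
  case (cp_const c)
  show ?case by (rule separately_poly_const)
next
  case cp_h
  show ?case
    using separately_poly_quat_norm by (simp add: rodrigues_param_def rodrigues_point_def Let_def)
next
  case (cp_M i j)
  show ?case
    using separately_poly_mat_rodrigues
    by (simp add: rodrigues_param_def rodrigues_point_def Let_def separately_poly_mat_def)
next
  case (cp_x i)
  have "separately_poly_vec (\<lambda>z. fst (snd (snd (rodrigues_param z))))"
    unfolding rodrigues_param_def rodrigues_point_def Let_def fst_conv snd_conv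
    by (intro separately_poly_vec_diff separately_poly_vec_uminus separately_poly_vec_smult
        separately_poly_vec_matrix_vector_mult separately_poly_mat_transpose
        separately_poly_mat_rodrigues separately_poly_vec_vector separately_poly_quat_norm)
  then show ?case
    by (simp add: case_prod_beta separately_poly_vec_def)
next
  case (cp_y i)
  have "separately_poly_vec (\<lambda>z. fst (snd (snd (snd (rodrigues_param z)))))"
    unfolding rodrigues_param_def rodrigues_point_def Let_def fst_conv snd_conv
    by (intro separately_poly_vec_add separately_poly_vec_smult separately_poly_vec_matrix_vector_mult
        separately_poly_mat_rodrigues separately_poly_vec_vector separately_poly_quat_norm)
  then show ?case
    by (simp add: case_prod_beta separately_poly_vec_def)
next
  case cp_r
  have "separately_poly (\<lambda>z. snd (snd (snd (snd (rodrigues_param z)))))"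
    unfolding rodrigues_param_def rodrigues_point_def Let_def snd_conv
    by (intro separately_poly_add separately_poly_mult separately_poly_cdot separately_poly_const
        separately_poly_vec_matrix_vector_mult separately_poly_mat_rodrigues separately_poly_vec_vector
        separately_poly_quat_norm)
  then show ?case
    by (simp add: case_prod_beta)
next
  case (cp_add f g)
  then show ?case by (simp add: separately_poly_add)
next
  case (cp_mult f g)
  then show ?case by (simp add: separately_poly_mult)
qed

lemma transpose_rodrigues_mat_mult:
  "transpose (rodrigues_mat a b c d) ** rodrigues_mat a b c d
     = mat (quat_norm a b c d * quat_norm a b c d :: 'a::comm_ring_1)"
  unfolding vec_eq_iff forall_3
  by (simp add: matrix_matrix_mult_def transpose_def sum_3 mat_def rodrigues_mat_def quat_norm_def)
    (simp add: algebra_simps)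

lemma det_rodrigues_mat: "det (rodrigues_mat a b c d) = (quat_norm a b c d)^3"
  by (simp add: det_3 rodrigues_mat_def quat_norm_def) (simp add: algebra_simps power3_eq_cube)

lemma det_scaleR_3: "det (k *\<^sub>R (M::real^3^3)) = k^3 * det M"
  by (simp add: det_3) (simp add: algebra_simps power3_eq_cube)

lemma rodrigues_rotation_SO3:
  fixes a b c d :: real
  assumes N: "quat_norm a b c d \<noteq> 0"
  defines "A \<equiv> (1 / quat_norm a b c d) *\<^sub>R rodrigues_mat a b c d"
  shows "A \<in> SO3" and "transpose A ** A = mat 1"
proof -
  let ?N = "quat_norm a b c d"
  have "transpose A ** A = (1 / ?N) *\<^sub>R ((1 / ?N) *\<^sub>R (transpose (rodrigues_mat a b c d) ** rodrigues_mat a b c d))"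
    unfolding A_def transpose_scalar by (simp add: scalar_matrix_assoc matrix_scalar_ac)
  also have "\<dots> = mat 1"
    unfolding transpose_rodrigues_mat_mult using N by (simp add: vec_eq_iff mat_def)
  finally show orth: "transpose A ** A = mat 1" .
  have "det A = (1 / ?N)^3 * ?N^3"
    unfolding A_def det_scaleR_3 det_rodrigues_mat by simp
  also have "\<dots> = 1"
    using N by (simp add: power_divide)
  finally show "A \<in> SO3"
    using orth by (simp add: SO3_def orthogonal_matrix)
qed

lemma cmat_rodrigues_mat:
  "cmat (rodrigues_mat a b c d) = rodrigues_mat (complex_of_real a) (of_real b) (of_real c) (of_real d)"
  unfolding vec_eq_iff forall_3 by (simp add: cmat_def rodrigues_mat_def)

lemma of_real_quat_norm:
  "complex_of_real (quat_norm a b c d) = quat_norm (of_real a) (of_real b) (of_real c) (of_real d)"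
  by (simp add: quat_norm_def)

lemma pscale_of_real_iso_point:
  "pscale (complex_of_real k) (iso_point A t) =
     (of_real k, cmat (k *\<^sub>R A), cvec (k *\<^sub>R (- (transpose A *v t))), cvec (k *\<^sub>R t), of_real (k * (t \<bullet> t)))"
  by (simp add: pscale_def iso_point_def cmat_def cvec_def vec_eq_iff)

lemma cdot_cvec_matrix: "cdot (cvec s) (cmat B *v cvec x) = of_real (s \<bullet> (B *v x))"
  by (simp add: cvec_matrix_vector_mult[symmetric] cdot_cvec)

lemma rodrigues_point_real:
  fixes a b c d :: real
  assumes N: "quat_norm a b c d \<noteq> 0"
  defines "A \<equiv> (1 / quat_norm a b c d) *\<^sub>R rodrigues_mat a b c d"
  shows "rodrigues_point (of_real a) (of_real b) (of_real c) (of_real d) (cvec t) (cvec u)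
          = pscale (of_real (quat_norm a b c d)) (iso_point A (t + A *v u))"
proof -
  let ?N = "quat_norm a b c d" and ?R = "rodrigues_mat a b c d"
  have AtA: "transpose A ** A = mat 1"
    using rodrigues_rotation_SO3(2)[OF N] unfolding A_def .
  have NA: "?N *\<^sub>R A = ?R"
    using N by (simp add: A_def)
  have x: "?N *\<^sub>R (- (transpose A *v (t + A *v u))) = - (transpose ?R *v t) - ?N *\<^sub>R u"
  proof -
    have "transpose A *v (t + A *v u) = transpose A *v t + u"
      by (simp add: matrix_vector_right_distrib matrix_vector_mul_assoc AtA del: transpose_matrix_vector)
    moreover have "?N *\<^sub>R (transpose A *v t) = transpose ?R *v t"
      by (simp add: scaleR_matrix_vector_assoc transpose_scalar[symmetric] NA del: transpose_matrix_vector)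
    ultimately show ?thesis
      by (simp add: scaleR_add_right scaleR_right_diff_distrib del: transpose_matrix_vector)
  qed
  have y: "?N *\<^sub>R (t + A *v u) = ?N *\<^sub>R t + ?R *v u"
    by (simp add: scaleR_add_right scaleR_matrix_vector_assoc NA)
  have "(A *v u) \<bullet> (A *v u) = u \<bullet> (transpose A *v (A *v u))"
    by (metis dot_lmul_matrix inner_commute transpose_matrix_vector)
  then have uu: "(A *v u) \<bullet> (A *v u) = u \<bullet> u"
    by (simp add: matrix_vector_mul_assoc AtA del: transpose_matrix_vector)
  have tu: "?N * (t \<bullet> (A *v u)) = t \<bullet> (?R *v u)"
    by (metis NA inner_scaleR_right scaleR_matrix_vector_assoc)
  have rr: "?N * ((t + A *v u) \<bullet> (t + A *v u)) = ?N * (t \<bullet> t) + 2 * (t \<bullet> (?R *v u)) + ?N * (u \<bullet> u)"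
    using uu tu by (simp add: inner_add_left inner_add_right inner_commute algebra_simps)
  have r: "complex_of_real ?N * of_real ((t + A *v u) \<bullet> (t + A *v u))
      = of_real ?N * of_real (t \<bullet> t) + 2 * of_real (t \<bullet> (?R *v u)) + of_real ?N * of_real (u \<bullet> u)"
    using arg_cong[OF rr, of complex_of_real] by simp
  show ?thesis
    unfolding pscale_of_real_iso_point rodrigues_point_def Let_def NA x y
    by (simp add: of_real_quat_norm[symmetric] cmat_rodrigues_mat[symmetric] cvec_diff cvec_uminus
        cvec_matrix_vector_mult cmat_transpose cvec_scaleR cvec_add cdot_cvec cdot_cvec_matrix r
        del: transpose_matrix_vector)
qed

lemma quat_norm_real_eq_0: "quat_norm (a::real) b c d = 0 \<Longrightarrow> a = 0 \<and> b = 0 \<and> c = 0 \<and> d = 0"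
proof -
  assume "quat_norm a b c d = 0"
  then have "a * a = 0" "b * b = 0" "c * c = 0" "d * d = 0"
    using zero_le_square[of a] zero_le_square[of b] zero_le_square[of c] zero_le_square[of d]
    unfolding quat_norm_def by linarith+
  then show ?thesis
    by simp
qed

lemma rodrigues_mat_0: "rodrigues_mat 0 0 0 0 = (0::'a::comm_ring_1^3^3)"
  unfolding vec_eq_iff forall_3 by (simp add: rodrigues_mat_def)

lemma rodrigues_param_real_in_iso_cone:
  assumes "\<forall>j. z j \<in> \<real>"
  shows "rodrigues_param z \<in> iso_cone"
proof -
  define a where "a j = Re (z j)" for j
  have za: "z j = of_real (a j)" for j
    unfolding a_def using assms by (metis Reals_cases Re_complex_of_real)
  define t where "t = (vector [a 4, a 5, a 6] :: real^3)"
  define u where "u = (vector [a 7, a 8, a 9] :: real^3)"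
  have "vector [z 4, z 5, z 6] = cvec t" "vector [z 7, z 8, z 9] = cvec u"
    by (simp_all add: vec3_eq_iff cvec_def t_def u_def za)
  then have Phi: "rodrigues_param z
      = rodrigues_point (of_real (a 0)) (of_real (a 1)) (of_real (a 2)) (of_real (a 3)) (cvec t) (cvec u)"
    unfolding rodrigues_param_def by (simp add: za)
  show ?thesis
  proof (cases "quat_norm (a 0) (a 1) (a 2) (a 3) = 0")
    case False
    define A where "A = (1 / quat_norm (a 0) (a 1) (a 2) (a 3)) *\<^sub>R rodrigues_mat (a 0) (a 1) (a 2) (a 3)"
    have "A \<in> SO3"
      using rodrigues_rotation_SO3(1)[OF False] unfolding A_def .
    moreover have "rodrigues_param z = pscale (of_real (quat_norm (a 0) (a 1) (a 2) (a 3))) (iso_point A (t + A *v u))"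
      unfolding Phi A_def by (rule rodrigues_point_real[OF False])
    ultimately show ?thesis
      unfolding iso_cone_def by blast
  next
    case True
    then have "rodrigues_param z = (0, 0, 0, 0, 0)"
      using quat_norm_real_eq_0[OF True]
      by (simp add: Phi rodrigues_point_def rodrigues_mat_0 quat_norm_def Let_def cdot_def)
    moreover have "pscale 0 (iso_point (mat 1) 0) = (0, 0, 0, 0, 0)"
      by (simp add: pscale_def iso_point_def vec_eq_iff)
    moreover have "mat 1 \<in> SO3"
      by (simp add: SO3_def orthogonal_matrix_id)
    ultimately show ?thesis
      unfolding iso_cone_def by (metis (mono_tags, lifting) mem_Collect_eq)
  qed
qed

text \<open>Only the first ten parameters enter, so the other ones may be taken real.\<close>
lemma rodrigues_param_in_Xvar:
  assumes "rodrigues_param z \<noteq> pt_zero"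
  shows "rodrigues_param z \<in> Xvar"
proof -
  define z' where "z' j = (if j < 10 then z j else 0)" for j
  have z': "rodrigues_param z' = rodrigues_param z"
    by (simp add: rodrigues_param_def z'_def)
  have "f (rodrigues_param z) = 0" if "cpoly f" "\<forall>s\<in>iso_cone. f s = 0" for f
  proof -
    have "f (rodrigues_param z') = 0"
      by (rule separately_poly_vanishing_on_reals[OF cpoly_comp_rodrigues_param[OF that(1)], where K = 10])
        (use that(2) rodrigues_param_real_in_iso_cone in \<open>auto simp: z'_def\<close>)
    then show ?thesis
      by (simp add: z')
  qed
  then show ?thesis
    using assms unfolding Xvar_def zariski_closure_def by blast
qed

section \<open>Lines give butterfly bonds\<close>

text \<open>The quaternion (-\<langle>v,w\<rangle>, v \<times> w) has norm \<langle>v,w\<rangle>^2 + \<langle>v \<times> w, v \<times> w\<rangle> = \<langle>v,v\<rangle>\<langle>w,w\<rangle>,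
  which vanishes for isotropic v and w.\<close>
lemma rodrigues_mat_isotropic_pair:
  fixes v w :: "complex^3"
  assumes vv: "cdot v v = 0" and ww: "cdot w w = 0"
  defines "c \<equiv> cdot v w"
  shows "rodrigues_mat (-c) (v$2*w$3 - v$3*w$2) (v$3*w$1 - v$1*w$3) (v$1*w$2 - v$2*w$1) = outer ((4*c) *s v) w"
    and "quat_norm (-c) (v$2*w$3 - v$3*w$2) (v$3*w$1 - v$1*w$3) (v$1*w$2 - v$2*w$1) = 0"
proof -
  have a: "v$1 * v$1 + v$2 * v$2 + v$3 * v$3 = 0" "w$1 * w$1 + w$2 * w$2 + w$3 * w$3 = 0"
    using vv ww by (simp_all add: cdot_3)
  have c: "c = v$1*w$1 + v$2*w$2 + v$3*w$3"
    by (simp add: c_def cdot_3)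
  show "quat_norm (-c) (v$2*w$3 - v$3*w$2) (v$3*w$1 - v$1*w$3) (v$1*w$2 - v$2*w$1) = 0"
    unfolding quat_norm_def c using a by algebra
  show "rodrigues_mat (-c) (v$2*w$3 - v$3*w$2) (v$3*w$1 - v$1*w$3) (v$1*w$2 - v$2*w$1) = outer ((4*c) *s v) w"
    unfolding vec_eq_iff forall_3 rodrigues_mat_def outer_def c
    by (simp only: vector_3 vec_lambda_beta vector_smult_component)
      (intro conjI; ((simp add: algebra_simps; fail) | (use a in algebra)))
qed

lemma rodrigues_mat_isotropic:
  fixes w :: "complex^3"
  assumes "cdot w w = 0"
  shows "rodrigues_mat 0 (w$1) (w$2) (w$3) = outer (2 *s w) w" and "quat_norm 0 (w$1) (w$2) (w$3) = 0"
proof -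
  have a: "w$1 * w$1 + w$2 * w$2 + w$3 * w$3 = 0"
    using assms by (simp add: cdot_3)
  show "quat_norm 0 (w$1) (w$2) (w$3) = 0"
    unfolding quat_norm_def using a by simp
  show "rodrigues_mat 0 (w$1) (w$2) (w$3) = outer (2 *s w) w"
    unfolding vec_eq_iff forall_3 rodrigues_mat_def outer_def
    by (simp only: vector_3 vec_lambda_beta vector_smult_component)
      (intro conjI; ((simp add: algebra_simps; fail) | (use a in algebra)))
qed

lemma isotropic_scale: "isotropic v \<Longrightarrow> c \<noteq> 0 \<Longrightarrow> isotropic (c *s v)"
  by (simp add: isotropic_def cdot_smult_left cdot_smult_right)

lemma exists_rodrigues_mat_outer:
  assumes v0: "isotropic v0" and w0: "isotropic w0"
  shows "\<exists>q0 q1 q2 q3 v w. quat_norm q0 q1 q2 q3 = 0 \<and> rodrigues_mat q0 q1 q2 q3 = outer v w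
    \<and> isotropic v \<and> isotropic w \<and> Smap v = Smap v0 \<and> Smap w = Smap w0"
proof (cases "cdot v0 w0 = 0")
  case False
  have "isotropic ((4 * cdot v0 w0) *s v0)" and "Smap ((4 * cdot v0 w0) *s v0) = Smap v0"
    using isotropic_scale[OF v0] Smap_scale False by simp_all
  then show ?thesis
    using rodrigues_mat_isotropic_pair[of v0 w0] v0 w0 by (metis isotropic_def)
next
  case True
  then obtain \<mu> where \<mu>: "v0 = \<mu> *s w0"
    using isotropic_orthogonal_parallel[OF w0] v0 cdot_commute by (metis isotropic_def)
  then have "\<mu> \<noteq> 0"
    using v0 by (auto simp: isotropic_def)
  then have "Smap (2 *s w0) = Smap v0"
    using \<mu> Smap_scale by simp
  moreover have "isotropic (2 *s w0)"
    using isotropic_scale[OF w0] by simp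
  ultimately show ?thesis
    using rodrigues_mat_isotropic w0 by (metis isotropic_def)
qed

lemma exists_cdot_eq: "v \<noteq> 0 \<Longrightarrow> \<exists>t. cdot v t = c"
proof -
  assume "v \<noteq> 0"
  then obtain k where k: "v$k \<noteq> 0"
    using nonzero_vec_component by blast
  have "cdot v ((c / v$k) *s axis k 1) = c"
    using k by (simp add: cdot_smult_right cdot_def axis_def if_distrib[of "(*) _"] cong: if_cong)
  then show ?thesis by blast
qed

lemma butterfly_points_in_Xvar:
  assumes "isotropic v0" "isotropic w0"
  obtains v w where "isotropic v" "isotropic w" "Smap v = Smap v0" "Smap w = Smap w0"
    "\<And>\<kappa> \<mu>. (0, outer v w, \<mu> *s w, \<kappa> *s v, -2 * \<kappa> * \<mu>) \<in> Xvar"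
proof -
  obtain q0 q1 q2 q3 v w where N: "quat_norm q0 q1 q2 q3 = 0" and R: "rodrigues_mat q0 q1 q2 q3 = outer v w"
    and v: "isotropic v" and w: "isotropic w" and Sv: "Smap v = Smap v0" and Sw: "Smap w = Smap w0"
    using exists_rodrigues_mat_outer[OF assms] by blast
  have "(0, outer v w, \<mu> *s w, \<kappa> *s v, -2 * \<kappa> * \<mu>) \<in> Xvar" for \<kappa> \<mu>
  proof -
    obtain t where t: "cdot v t = - \<mu>"
      using exists_cdot_eq v by (auto simp: isotropic_def)
    obtain u where u: "cdot w u = \<kappa>"
      using exists_cdot_eq w by (auto simp: isotropic_def)
    define z where "z j = [q0, q1, q2, q3, t$1, t$2, t$3, u$1, u$2, u$3] ! j" for j
    have "vector [z 4, z 5, z 6] = t" "vector [z 7, z 8, z 9] = u"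
      by (simp_all add: z_def vec3_eq_iff)
    then have "rodrigues_param z = rodrigues_point q0 q1 q2 q3 t u"
      unfolding rodrigues_param_def by (simp add: z_def)
    also have "\<dots> = (0, outer v w, \<mu> *s w, \<kappa> *s v, -2 * \<kappa> * \<mu>)"
      using t u by (simp add: rodrigues_point_def Let_def N R transpose_outer_mult_vector
          outer_mult_vector cdot_smult_right cdot_commute[of t v] del: transpose_matrix_vector)
    finally have z: "rodrigues_param z = (0, outer v w, \<mu> *s w, \<kappa> *s v, -2 * \<kappa> * \<mu>)" .
    have "outer v w \<noteq> 0"
      using v w by (simp add: isotropic_def outer_nonzero)
    then have "rodrigues_param z \<noteq> pt_zero"
      by (simp add: z pt_zero_def)
    then have "rodrigues_param z \<in> Xvar"
      by (rule rodrigues_param_in_Xvar)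
    then show ?thesis
      by (simp only: z)
  qed
  then show ?thesis
    using that v w Sv Sw by blast
qed

lemma butterfly_point_rank_one:
  assumes "(0, outer v w, \<mu> *s w, \<kappa> *s v, -2 * \<kappa> * \<mu>) \<in> Xvar" "v \<noteq> 0" "w \<noteq> 0"
  shows "butterfly_point (0, outer v w, \<mu> *s w, \<kappa> *s v, -2 * \<kappa> * \<mu>)"
  using assms outer_nonzero by (simp add: butterfly_point_def Bset_def vec_eq_iff outer_def algebra_simps)

theorem butterfly_bond_exists:
  assumes L: "norm L = 1" and R: "norm R = 1"
    and lp: "on_line_parallel p {..<m} L" and lP: "on_line_parallel P {m..<n} R"
  shows "\<exists>\<beta> v w. butterfly_bond n p P d \<beta> \<and> isotropic v \<and> isotropic w
    \<and> Mof \<beta> = outer v w \<and> Smap w = L \<and> Smap v = R"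
proof -
  obtain w0 v0 where "isotropic w0" "Smap w0 = L" "isotropic v0" "Smap v0 = R"
    using Smap_surj[OF L] Smap_surj[OF R] by blast
  then obtain v w where v: "isotropic v" and w: "isotropic w" and Sv: "Smap v = R" and Sw: "Smap w = L"
    and X: "\<And>\<kappa> \<mu>. (0, outer v w, \<mu> *s w, \<kappa> *s v, -2 * \<kappa> * \<mu>) \<in> Xvar"
    using butterfly_points_in_Xvar by metis
  obtain \<kappa> where \<kappa>: "\<forall>i\<in>{..<m}. cdot w (cvec (p i)) = - \<kappa>"
    using lp on_line_parallel_Smap_iff[OF w] Sw by (metis minus_minus)
  obtain \<mu> where \<mu>: "\<forall>i\<in>{m..<n}. cdot v (cvec (P i)) = - \<mu>"
    using lP on_line_parallel_Smap_iff[OF v] Sv by (metis minus_minus)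
  define \<beta> where "\<beta> = (0::complex, outer v w, \<mu> *s w, \<kappa> *s v, -2 * \<kappa> * \<mu>)"
  have "lform (p i) (P i) (d i) \<beta> = 0" if "i < n" for i
    using \<kappa> \<mu> that unfolding \<beta>_def lform_butterfly by (cases "i < m") simp_all
  moreover have "butterfly_point \<beta>"
    unfolding \<beta>_def using butterfly_point_rank_one X v w by (simp add: isotropic_def)
  moreover have "\<beta> \<in> Xvar"
    unfolding \<beta>_def by (rule X)
  ultimately have "butterfly_bond n p P d \<beta>"
    by (simp add: butterfly_bond_def bonds_def KPi_def butterfly_point_def Bset_def)
  moreover have "Mof \<beta> = outer v w"
    by (simp add: \<beta>_def Mof_def)
  ultimately show ?thesis
    using v w Sv Sw by blast
qed

theorem mainTheorem5:
  fixes n :: nat and p P :: "nat \<Rightarrow> real^3" and d :: "nat \<Rightarrow> real"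
  assumes "\<forall>i<n. d i \<ge> 0"
  shows "(\<forall>\<beta> v w. butterfly_bond n p P d \<beta> \<and> isotropic v \<and> isotropic w \<and> Mof \<beta> = outer v w
            \<longrightarrow> (\<exists>\<sigma> m. \<sigma> permutes {..<n} \<and> m \<le> n
                  \<and> on_line_parallel (\<lambda>i. p (\<sigma> i)) {..<m} (Smap w)
                  \<and> on_line_parallel (\<lambda>i. P (\<sigma> i)) {m..<n} (Smap v)))
       \<and> (\<forall>L R m. norm L = 1 \<and> norm R = 1 \<and> m \<le> n
            \<and> on_line_parallel p {..<m} L \<and> on_line_parallel P {m..<n} R
            \<longrightarrow> (\<exists>\<beta> v w. butterfly_bond n p P d \<beta> \<and> isotropic v \<and> isotropic w
                  \<and> Mof \<beta> = outer v w \<and> Smap w = L \<and> Smap v = R))"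
  \<comment> \<open>d enters lform only through the coefficient of h, which vanishes at bonds\<close>
  using butterfly_bond_lines butterfly_bond_exists by blast

end
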